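(* Let $\lambda>0$ and let $h$ be a $2\pi$-periodic analytic function on a neighborhood of $\{z:|\operatorname{Im}z|\le\lambda\}$ that does not vanish for $|\operatorname{Im}z|<\lambda$, with $\log h$ a continuous branch of its logarithm on the open strip extended to $\operatorname{Im}z=\pm\lambda$ (away from zeros of $h$) by limits from inside the strip. Suppose $h$ vanishes to order $k$ at $z_0=t_0+i\lambda$. Then for every $\chi\in C_c^\infty(S^1)$ supported in a sufficiently small neighborhood of $t_0$ with $\chi\equiv1$ near $t_0$, $$\int_{S^1}\chi(t)\log h(t+i\lambda)e^{int}\,dt=-\frac{2\pi k}{|n|}e^{int_0}+O(n^{-2})\qquad (n\to+\infty).$$ Similarly, if $h$ vanishes to order $k$ at $z_0=t_0-i\lambda$, then for such $\chi$, $$\int_{S^1}\chi(t)\log h(t-i\lambda)e^{int}\,dt=-\frac{2\pi k}{|n|}e^{int_0}+O(n^{-2})\qquad (n\to-\infty).$$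
   Context: $S^1=\mathbb{R}/2\pi\mathbb{Z}$. *)

theory Defs
  imports "HOL-Complex_Analysis.Complex_Analysis" "HOL-Library.Landau_Symbols"
begin

definition smooth_real :: "(real \<Rightarrow> real) \<Rightarrow> bool" where
  "smooth_real f \<longleftrightarrow> (\<forall>m::nat. \<forall>t. ((deriv ^^ m) f) differentiable (at t))"

definition closed_strip :: "real \<Rightarrow> complex set" where
  "closed_strip lam = {z. \<bar>Im z\<bar> \<le> lam}"

definition open_strip :: "real \<Rightarrow> complex set" where
  "open_strip lam = {z. \<bar>Im z\<bar> < lam}"

end

theory Submission
  imports Defs
begin

text \<open>
  Near \<open>z0\<close>, \<open>h = (1 - exp (\<mp>i (z - z0)))^k exp G\<close>
  with \<open>G\<close> holomorphic; on the connected strip side two continuous logarithms of \<open>h\<close> differ by a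
  constant, so on the boundary line near \<open>t0\<close> we get \<open>L (t \<plusminus> i \<lambda>) = k F t + G (t \<plusminus> i \<lambda>)\<close> with
  \<open>F t = Log (1 - exp (\<mp>i (t - t0)))\<close>. Hence \<open>\<chi> L = k F + \<chi> G - k (1 - \<chi>) F\<close> on the period.
  The Fourier coefficient of \<open>F\<close> is exactly \<open>-2\<pi>/|n| exp (i n t0)\<close> for \<open>\<plusminus>n > 0\<close>, while \<open>\<chi> G\<close> and
  \<open>(1 - \<chi>) F\<close> are \<open>C\<^sup>2\<close> and match to first order at the ends of the period, so integrating by
  parts twice makes their coefficients \<open>O(1/n\<^sup>2)\<close>.
\<close>

section \<open>Functions of class \<open>C\<^sup>2\<close> near a point\<close>

definition C2_at :: "(real \<Rightarrow> 'a::real_normed_vector) \<Rightarrow> real \<Rightarrow> bool" where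
  "C2_at f t \<longleftrightarrow> (\<exists>d>0. \<exists>f' f''. (\<forall>s\<in>ball t d.
      (f has_vector_derivative f' s) (at s) \<and> (f' has_vector_derivative f'' s) (at s))
      \<and> continuous_on (ball t d) f'')"

lemma C2_atI:
  assumes "d > 0"
    and "\<And>s. s \<in> ball t d \<Longrightarrow> (f has_vector_derivative f' s) (at s)"
    and "\<And>s. s \<in> ball t d \<Longrightarrow> (f' has_vector_derivative f'' s) (at s)"
    and "continuous_on (ball t d) f''"
  shows "C2_at f t"
  unfolding C2_at_def using assms by blast

lemma C2_atE:
  assumes "C2_at f t"
  obtains d f' f'' where "d > 0"
    and "\<And>s. s \<in> ball t d \<Longrightarrow> (f has_vector_derivative f' s) (at s)"
    and "\<And>s. s \<in> ball t d \<Longrightarrow> (f' has_vector_derivative f'' s) (at s)"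
    and "continuous_on (ball t d) f''"
  using assms unfolding C2_at_def by blast

lemma C2_at_transform:
  assumes "C2_at g t" "d > 0" "\<And>s. s \<in> ball t d \<Longrightarrow> f s = g s"
  shows "C2_at f t"
proof -
  obtain d' g' g'' where "d' > 0"
    and g': "\<And>s. s \<in> ball t d' \<Longrightarrow> (g has_vector_derivative g' s) (at s)"
    and g'': "\<And>s. s \<in> ball t d' \<Longrightarrow> (g' has_vector_derivative g'' s) (at s)"
    and cont: "continuous_on (ball t d') g''"
    using assms(1) by (rule C2_atE) blast
  define e where "e = min d d'"
  have sub: "ball t e \<subseteq> ball t d" "ball t e \<subseteq> ball t d'" by (auto simp: e_def)
  have "(f has_vector_derivative g' s) (at s)" if "s \<in> ball t e" for s
    by (rule has_vector_derivative_transform_within_open[OF g' _ that])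
       (use that sub assms(3) in auto)
  then show ?thesis
    using sub \<open>d > 0\<close> \<open>d' > 0\<close> g'' continuous_on_subset[OF cont sub(2)]
    by (intro C2_atI[of e]) (auto simp: e_def)
qed

lemma C2_at_const: "C2_at (\<lambda>s. c) t"
  by (rule C2_atI[of 1 _ _ "\<lambda>s. 0" "\<lambda>s. 0"]) (auto intro: derivative_eq_intros)

lemma C2_at_add:
  assumes "C2_at f t" "C2_at g t"
  shows "C2_at (\<lambda>s. f s + g s) t"
proof -
  obtain d f' f'' where "d > 0"
    and f': "\<And>s. s \<in> ball t d \<Longrightarrow> (f has_vector_derivative f' s) (at s)"
    and f'': "\<And>s. s \<in> ball t d \<Longrightarrow> (f' has_vector_derivative f'' s) (at s)"
    and cf: "continuous_on (ball t d) f''"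
    using assms(1) by (rule C2_atE) blast
  obtain e g' g'' where "e > 0"
    and g': "\<And>s. s \<in> ball t e \<Longrightarrow> (g has_vector_derivative g' s) (at s)"
    and g'': "\<And>s. s \<in> ball t e \<Longrightarrow> (g' has_vector_derivative g'' s) (at s)"
    and cg: "continuous_on (ball t e) g''"
    using assms(2) by (rule C2_atE) blast
  show ?thesis
  proof (rule C2_atI[of "min d e"])
    show "continuous_on (ball t (min d e)) (\<lambda>s. f'' s + g'' s)"
      by (intro continuous_intros continuous_on_subset[OF cf] continuous_on_subset[OF cg]) auto
  qed (use \<open>d > 0\<close> \<open>e > 0\<close> f' f'' g' g'' in \<open>auto intro!: has_vector_derivative_add\<close>)
qed

lemma C2_at_minus:
  assumes "C2_at f t"
  shows "C2_at (\<lambda>s. - f s) t"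
proof -
  obtain d f' f'' where "d > 0"
    and f': "\<And>s. s \<in> ball t d \<Longrightarrow> (f has_vector_derivative f' s) (at s)"
    and f'': "\<And>s. s \<in> ball t d \<Longrightarrow> (f' has_vector_derivative f'' s) (at s)"
    and cf: "continuous_on (ball t d) f''"
    using assms by (rule C2_atE) blast
  show ?thesis
    by (rule C2_atI[of d _ _ "\<lambda>s. - f' s" "\<lambda>s. - f'' s"])
       (use \<open>d > 0\<close> f' f'' cf in \<open>auto intro!: has_vector_derivative_minus continuous_intros\<close>)
qed

lemma C2_at_diff:
  assumes "C2_at f t" "C2_at g t"
  shows "C2_at (\<lambda>s. f s - g s) t"
  using C2_at_add[OF assms(1) C2_at_minus[OF assms(2)]] by simp

lemma C2_at_mult:
  fixes f g :: "real \<Rightarrow> 'a::real_normed_algebra"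
  assumes "C2_at f t" "C2_at g t"
  shows "C2_at (\<lambda>s. f s * g s) t"
proof -
  obtain d f' f'' where "d > 0"
    and f': "\<And>s. s \<in> ball t d \<Longrightarrow> (f has_vector_derivative f' s) (at s)"
    and f'': "\<And>s. s \<in> ball t d \<Longrightarrow> (f' has_vector_derivative f'' s) (at s)"
    and cf: "continuous_on (ball t d) f''"
    using assms(1) by (rule C2_atE) blast
  obtain e g' g'' where "e > 0"
    and g': "\<And>s. s \<in> ball t e \<Longrightarrow> (g has_vector_derivative g' s) (at s)"
    and g'': "\<And>s. s \<in> ball t e \<Longrightarrow> (g' has_vector_derivative g'' s) (at s)"
    and cg: "continuous_on (ball t e) g''"
    using assms(2) by (rule C2_atE) blast
  define B where "B = ball t (min d e)"
  have inB: "s \<in> ball t d" "s \<in> ball t e" if "s \<in> B" for s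
    using that by (auto simp: B_def)
  have "isCont f s" "isCont f' s" "isCont g s" "isCont g' s" if "s \<in> B" for s
    using f'[OF inB(1)[OF that]] f''[OF inB(1)[OF that]] g'[OF inB(2)[OF that]] g''[OF inB(2)[OF that]]
    by (simp_all add: has_vector_derivative_continuous)
  then have "continuous_on B f" "continuous_on B f'" "continuous_on B g" "continuous_on B g'"
    by (auto intro!: continuous_at_imp_continuous_on)
  moreover have "continuous_on B f''" "continuous_on B g''"
    using cf cg by (auto simp: B_def elim!: continuous_on_subset)
  ultimately have "continuous_on B (\<lambda>s. f s * g'' s + f' s * g' s + (f' s * g' s + f'' s * g s))"
    by (intro continuous_intros)
  moreover have "((\<lambda>s. f s * g s) has_vector_derivative f s * g' s + f' s * g s) (at s)"
    and "((\<lambda>s. f s * g' s + f' s * g s) has_vector_derivative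
          f s * g'' s + f' s * g' s + (f' s * g' s + f'' s * g s)) (at s)" if "s \<in> B" for s
    using inB[OF that] f' f'' g' g'' by (auto intro!: derivative_intros)
  ultimately show ?thesis
    using \<open>d > 0\<close> \<open>e > 0\<close> unfolding B_def by (intro C2_atI[of "min d e"]) auto
qed

lemma C2_at_of_real_smooth:
  assumes "smooth_real f"
  shows "C2_at (\<lambda>s. of_real (f s) :: 'a::real_normed_algebra_1) t"
proof -
  have diff: "(deriv ^^ m) f differentiable (at s)" for m s
    using assms unfolding smooth_real_def by blast
  have "(f has_real_derivative deriv f s) (at s)"
    and "(deriv f has_real_derivative deriv (deriv f) s) (at s)" for s
    using diff[of 0 s] diff[of 1 s] by (simp_all add: DERIV_deriv_iff_real_differentiable)
  moreover have "isCont (deriv (deriv f)) s" for s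
    using diff[of 2 s] by (simp add: numeral_2_eq_2 differentiable_imp_continuous_within)
  then have "continuous_on (ball t 1) (\<lambda>s. of_real (deriv (deriv f) s) :: 'a)"
    by (intro continuous_intros continuous_at_imp_continuous_on) auto
  ultimately show ?thesis
    by (intro C2_atI[of 1 _ _ "\<lambda>s. of_real (deriv f s)" "\<lambda>s. of_real (deriv (deriv f) s)"])
       (auto intro!: has_vector_derivative_of_real)
qed

lemma C2_at_holomorphic_comp:
  assumes "f holomorphic_on S" "open S" "of_real t + c \<in> S"
  shows "C2_at (\<lambda>s. f (of_real s + c)) t"
proof -
  obtain d where "d > 0" and dS: "ball (of_real t + c) d \<subseteq> S"
    using assms(2,3) openE by blast
  have inS: "of_real s + c \<in> S" if "s \<in> ball t d" for s
  proof -
    have "dist (of_real t + c) (of_real s + c) = dist t s"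
      by (simp add: dist_norm flip: of_real_diff)
    then show ?thesis using dS that by auto
  qed
  have f': "deriv f holomorphic_on S" and f'': "deriv (deriv f) holomorphic_on S"
    using assms(1,2) by (auto intro!: holomorphic_deriv)
  have chain: "((\<lambda>s. g (of_real s + c)) has_vector_derivative deriv g (of_real s + c)) (at s)"
    if "g holomorphic_on S" "s \<in> ball t d" for g s
  proof -
    have "((\<lambda>s. of_real s + c) has_vector_derivative 1) (at s)"
      by (auto intro!: derivative_eq_intros)
    moreover have "(g has_field_derivative deriv g (of_real s + c)) (at (of_real s + c))"
      by (rule holomorphic_derivI[OF that(1) assms(2) inS[OF that(2)]])
    ultimately show ?thesis
      using field_vector_diff_chain_at[of "\<lambda>s. of_real s + c" 1 s g] by (simp add: o_def)
  qed
  have "continuous_on (ball t d) (\<lambda>s. deriv (deriv f) (of_real s + c))"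
    by (rule continuous_on_compose2[OF holomorphic_on_imp_continuous_on[OF f'']])
       (use inS in \<open>auto intro!: continuous_intros\<close>)
  with \<open>d > 0\<close> chain[OF assms(1)] chain[OF f'] show ?thesis
    by (intro C2_atI[of d t _ "\<lambda>s. deriv f (of_real s + c)" "\<lambda>s. deriv (deriv f) (of_real s + c)"])
       auto
qed

lemma C2_at_vector_derivative:
  assumes "C2_at f t"
  shows "(f has_vector_derivative vector_derivative f (at t)) (at t)"
    and "((\<lambda>s. vector_derivative f (at s)) has_vector_derivative
           vector_derivative (\<lambda>s. vector_derivative f (at s)) (at t)) (at t)"
    and "isCont (\<lambda>s. vector_derivative (\<lambda>s. vector_derivative f (at s)) (at s)) t"
proof -
  obtain d f' f'' where "d > 0"
    and f': "\<And>s. s \<in> ball t d \<Longrightarrow> (f has_vector_derivative f' s) (at s)"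
    and f'': "\<And>s. s \<in> ball t d \<Longrightarrow> (f' has_vector_derivative f'' s) (at s)"
    and cf: "continuous_on (ball t d) f''"
    using assms by (rule C2_atE) blast
  have t: "t \<in> ball t d" using \<open>d > 0\<close> by simp
  have vd1: "vector_derivative f (at s) = f' s" if "s \<in> ball t d" for s
    using f'[OF that] by (rule vector_derivative_at)
  have d2: "((\<lambda>s. vector_derivative f (at s)) has_vector_derivative f'' s) (at s)"
    if "s \<in> ball t d" for s
    by (rule has_vector_derivative_transform_within_open[OF f''[OF that] _ that]) (auto simp: vd1)
  have vd2: "vector_derivative (\<lambda>s. vector_derivative f (at s)) (at s) = f'' s"
    if "s \<in> ball t d" for s
    using d2[OF that] by (rule vector_derivative_at)
  show "(f has_vector_derivative vector_derivative f (at t)) (at t)"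
    using f'[OF t] vd1[OF t] by simp
  show "((\<lambda>s. vector_derivative f (at s)) has_vector_derivative
           vector_derivative (\<lambda>s. vector_derivative f (at s)) (at t)) (at t)"
    using d2[OF t] vd2[OF t] by simp
  have "continuous_on (ball t d) (\<lambda>s. vector_derivative (\<lambda>s. vector_derivative f (at s)) (at s))"
    using cf by (rule continuous_on_eq) (simp add: vd2)
  then show "isCont (\<lambda>s. vector_derivative (\<lambda>s. vector_derivative f (at s)) (at s)) t"
    using t by (simp add: continuous_on_eq_continuous_at)
qed

lemma C2_at_isCont: "C2_at f t \<Longrightarrow> isCont f t"
  using C2_at_vector_derivative(1) has_vector_derivative_continuous by blast

section \<open>Fourier coefficients of \<open>C\<^sup>2\<close> functions\<close>

lemma exp_int_mult_add_2pi:
  "exp (\<i> * of_int n * complex_of_real (t + 2 * pi)) = exp (\<i> * of_int n * complex_of_real t)"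
proof -
  have "\<i> * of_int n * complex_of_real (t + 2 * pi) =
      \<i> * of_int n * complex_of_real t + \<i> * (of_int n * (of_real pi * 2))"
    by (simp add: algebra_simps)
  then show ?thesis by (simp only: exp_plus_2pin)
qed

lemma has_vector_derivative_exp_int_mult:
  "((\<lambda>t. exp (\<i> * of_int n * complex_of_real t)) has_vector_derivative
     \<i> * of_int n * exp (\<i> * of_int n * complex_of_real t)) (at t within S)"
proof -
  have "((\<lambda>z. exp (\<i> * of_int n * z)) has_field_derivative
      exp (\<i> * of_int n * complex_of_real t) * (\<i> * of_int n)) (at (of_real t))"
    by (auto intro!: derivative_eq_intros)
  from has_vector_derivative_real_field[OF this] show ?thesis
    by (simp add: mult.commute)
qed

lemma period_integral_by_parts:
  fixes f f' :: "real \<Rightarrow> complex"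
  assumes "n \<noteq> 0"
    and f': "\<And>t. t \<in> {a..a + 2 * pi} \<Longrightarrow> (f has_vector_derivative f' t) (at t)"
    and "continuous_on {a..a + 2 * pi} f'" and "f a = f (a + 2 * pi)"
  shows "integral {a..a + 2 * pi} (\<lambda>t. f t * exp (\<i> * of_int n * of_real t)) =
     - integral {a..a + 2 * pi} (\<lambda>t. f' t * exp (\<i> * of_int n * of_real t)) / (\<i> * of_int n)"
proof -
  define b where "b = a + 2 * pi"
  define E where "E t = exp (\<i> * of_int n * complex_of_real t)" for t
  define H where "H t = f t * E t / (\<i> * of_int n)" for t
  have H': "(H has_vector_derivative f t * E t + f' t * E t / (\<i> * of_int n)) (at t within {a..b})"
    if "t \<in> {a..b}" for t
  proof -
    have "(H has_vector_derivative (f t * (\<i> * of_int n * E t) + f' t * E t) / (\<i> * of_int n))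
        (at t within {a..b})"
      unfolding H_def E_def
      by (intro derivative_intros has_vector_derivative_exp_int_mult
          has_vector_derivative_at_within[OF f'[OF that[unfolded b_def]]])
    then show ?thesis using \<open>n \<noteq> 0\<close> by (simp add: field_simps)
  qed
  have "E b = E a"
    unfolding E_def b_def by (rule exp_int_mult_add_2pi)
  moreover have "f b = f a"
    using assms(4) by (simp add: b_def)
  ultimately have "H b - H a = 0"
    by (simp add: H_def)
  moreover have "((\<lambda>t. f t * E t + f' t * E t / (\<i> * of_int n)) has_integral H b - H a) {a..b}"
    by (rule fundamental_theorem_of_calculus[OF _ H']) (simp add: b_def)
  ultimately have "((\<lambda>t. f t * E t + f' t * E t / (\<i> * of_int n)) has_integral 0) {a..b}"
    by (simp only:)
  moreover have "((\<lambda>t. f' t * E t / (\<i> * of_int n)) has_integral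
      integral {a..b} (\<lambda>t. f' t * E t) / (\<i> * of_int n)) {a..b}"
    using assms(3) unfolding b_def E_def
    by (intro has_integral_divide integrable_integral integrable_continuous_interval
        continuous_intros)
  ultimately have "((\<lambda>t. (f t * E t + f' t * E t / (\<i> * of_int n)) - f' t * E t / (\<i> * of_int n))
      has_integral 0 - integral {a..b} (\<lambda>t. f' t * E t) / (\<i> * of_int n)) {a..b}"
    by (rule has_integral_diff)
  then have "((\<lambda>t. f t * E t) has_integral
      - integral {a..b} (\<lambda>t. f' t * E t) / (\<i> * of_int n)) {a..b}"
    by simp
  then show ?thesis unfolding E_def b_def by (rule integral_unique)
qed

lemma has_integral_exp_int_mult:
  assumes "n \<noteq> 0"
  shows "((\<lambda>t. exp (\<i> * of_int n * complex_of_real t)) has_integral 0) {a..a + 2 * pi}"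
proof -
  have "integral {a..a + 2 * pi} (\<lambda>t. 1 * exp (\<i> * of_int n * complex_of_real t)) = 0"
    using period_integral_by_parts[where f = "\<lambda>t. 1" and f' = "\<lambda>t. 0"] assms
    by (auto intro: derivative_eq_intros)
  moreover have "(\<lambda>t. exp (\<i> * of_int n * complex_of_real t)) integrable_on {a..a + 2 * pi}"
    by (intro integrable_continuous_interval continuous_intros)
  ultimately show ?thesis by (simp add: has_integral_integral)
qed

definition C2_on_period :: "(real \<Rightarrow> 'a::real_normed_vector) \<Rightarrow> real \<Rightarrow> bool" where
  "C2_on_period f a \<longleftrightarrow> (\<forall>t\<in>{a..a + 2 * pi}. C2_at f t) \<and> f a = f (a + 2 * pi) \<and>
     vector_derivative f (at a) = vector_derivative f (at (a + 2 * pi))"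

lemma C2_on_period_continuous: "C2_on_period f a \<Longrightarrow> continuous_on {a..a + 2 * pi} f"
  unfolding C2_on_period_def by (blast intro: continuous_at_imp_continuous_on C2_at_isCont)

lemma fourier_coeff_C2_bound:
  fixes f :: "real \<Rightarrow> complex"
  assumes "C2_on_period f a"
  shows "\<exists>C. \<forall>n::int. n \<noteq> 0 \<longrightarrow>
     norm (integral {a..a + 2 * pi} (\<lambda>t. f t * exp (\<i> * of_int n * of_real t))) \<le> C / (of_int n)^2"
proof -
  let ?I = "{a..a + 2 * pi}"
  have C2: "\<And>t. t \<in> ?I \<Longrightarrow> C2_at f t" and "f a = f (a + 2 * pi)"
    and "vector_derivative f (at a) = vector_derivative f (at (a + 2 * pi))"
    using assms unfolding C2_on_period_def by auto
  define f' where "f' s = vector_derivative f (at s)" for s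
  define f'' where "f'' s = vector_derivative f' (at s)" for s
  have f': "(f has_vector_derivative f' t) (at t)" and f'': "(f' has_vector_derivative f'' t) (at t)"
    and "isCont f'' t" if "t \<in> ?I" for t
    using C2_at_vector_derivative[OF C2] that unfolding f'_def f''_def by blast+
  then have "continuous_on ?I f''"
    by (intro continuous_at_imp_continuous_on) blast
  have "continuous_on ?I f'"
    by (rule continuous_at_imp_continuous_on) (use f'' has_vector_derivative_continuous in blast)
  have "compact (f'' ` ?I)"
    using \<open>continuous_on ?I f''\<close> by (intro compact_continuous_image compact_Icc)
  then obtain M where M: "\<And>t. t \<in> ?I \<Longrightarrow> norm (f'' t) \<le> M"
    by (meson bounded_iff compact_imp_bounded imageI)
  have "norm (integral ?I (\<lambda>t. f t * exp (\<i> * of_int n * of_real t))) \<le> M * (2 * pi) / (of_int n)^2"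
    if "n \<noteq> 0" for n :: int
  proof -
    define E where "E t = exp (\<i> * of_int n * complex_of_real t)" for t
    have "integral ?I (\<lambda>t. f t * E t) =
        - (- integral ?I (\<lambda>t. f'' t * E t) / (\<i> * of_int n)) / (\<i> * of_int n)"
      using period_integral_by_parts[OF that f' \<open>continuous_on ?I f'\<close>]
        period_integral_by_parts[OF that f'' \<open>continuous_on ?I f''\<close>]
        \<open>f a = f (a + 2 * pi)\<close> \<open>vector_derivative f (at a) = vector_derivative f (at (a + 2 * pi))\<close>
      unfolding E_def f'_def by simp
    also have "\<dots> = - integral ?I (\<lambda>t. f'' t * E t) / (of_int n)^2"
      by (simp add: power2_eq_square field_simps)
    finally have eq: "norm (integral ?I (\<lambda>t. f t * E t)) =
        norm (integral ?I (\<lambda>t. f'' t * E t)) / (of_int n)^2"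
      by (simp add: norm_divide norm_power)
    have "norm (integral ?I (\<lambda>t. f'' t * E t)) \<le> M * (a + 2 * pi - a)"
      using M \<open>continuous_on ?I f''\<close> unfolding E_def
      by (intro integral_bound continuous_intros) (auto simp: norm_mult)
    then have "norm (integral ?I (\<lambda>t. f'' t * E t)) / (of_int n)^2 \<le> M * (2 * pi) / (of_int n)^2"
      by (intro divide_right_mono) (auto simp: E_def)
    with eq show ?thesis by (simp add: E_def)
  qed
  then show ?thesis by blast
qed

section \<open>The model logarithmic singularity\<close>

text \<open>For \<open>\<sigma> = \<plusminus>1\<close> and \<open>Im z0 = \<sigma> \<lambda>\<close> this has positive real part on the open strip, so its
  principal logarithm is a branch there.\<close>

definition zero_factor :: "int \<Rightarrow> complex \<Rightarrow> complex \<Rightarrow> complex" where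
  "zero_factor \<sigma> z0 z = 1 - exp (- (\<i> * of_int \<sigma> * (z - z0)))"

lemma zero_factor_add_2pi: "zero_factor \<sigma> z0 (z + of_real (2 * pi)) = zero_factor \<sigma> z0 z"
proof -
  have "- (\<i> * of_int \<sigma> * (z + of_real (2 * pi) - z0)) =
      - (\<i> * of_int \<sigma> * (z - z0)) + \<i> * (of_int (- \<sigma>) * (of_real pi * 2))"
    by (simp add: algebra_simps)
  then show ?thesis unfolding zero_factor_def by (simp only: exp_plus_2pin)
qed

lemma Re_zero_factor:
  "Re (zero_factor \<sigma> z0 z) = 1 - exp (of_int \<sigma> * Im (z - z0)) * cos (of_int \<sigma> * Re (z - z0))"
  by (simp add: zero_factor_def Re_exp)

lemma Re_zero_factor_pos_strip:
  assumes "of_int \<sigma> * Im (z - z0) < 0"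
  shows "Re (zero_factor \<sigma> z0 z) > 0"
proof -
  have "exp (of_int \<sigma> * Im (z - z0)) * cos (of_int \<sigma> * Re (z - z0)) \<le> exp (of_int \<sigma> * Im (z - z0))"
    by (simp add: mult_left_le)
  also have "\<dots> < 1" using assms by simp
  finally show ?thesis by (simp add: Re_zero_factor)
qed

lemma Re_zero_factor_pos_line:
  assumes "\<sigma> \<in> {1, -1}" "Im z = Im z0" "0 < \<bar>Re (z - z0)\<bar>" "\<bar>Re (z - z0)\<bar> \<le> pi"
  shows "Re (zero_factor \<sigma> z0 z) > 0"
proof -
  define x where "x = Re (z - z0)"
  have "cos (of_int \<sigma> * x) = cos \<bar>x\<bar>"
    using assms(1) by (auto simp: abs_if)
  also have "\<dots> < cos 0"
    using assms(3,4) unfolding x_def by (intro cos_monotone_0_pi) auto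
  finally show ?thesis using assms(2) by (simp add: Re_zero_factor x_def)
qed

lemma zero_factor_eq_mult:
  assumes "\<sigma> \<noteq> 0"
  obtains q where "q holomorphic_on UNIV" "q z0 \<noteq> 0" "\<And>z. zero_factor \<sigma> z0 z = (z - z0) * q z"
proof -
  define f where "f = zero_factor \<sigma> z0"
  define q where "q z = (if z = z0 then deriv f z0 else (f z - f z0) / (z - z0))" for z
  have "f holomorphic_on UNIV" unfolding f_def zero_factor_def by (intro holomorphic_intros)
  then have "q holomorphic_on UNIV" unfolding q_def by (intro pole_lemma_open) auto
  moreover have "(f has_field_derivative \<i> * of_int \<sigma>) (at z0)"
    unfolding f_def zero_factor_def by (auto intro!: derivative_eq_intros)
  then have "q z0 \<noteq> 0" using assms by (simp add: q_def DERIV_imp_deriv)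
  moreover have "f z0 = 0" by (simp add: f_def zero_factor_def)
  then have "zero_factor \<sigma> z0 z = (z - z0) * q z" for z
    by (cases "z = z0") (simp_all add: q_def f_def)
  ultimately show ?thesis using that by blast
qed

lemma abs_ln_mult_le_sqrt:
  fixes r :: real assumes "0 < r" "r \<le> 1"
  shows "r * \<bar>ln r\<bar> \<le> 2 * sqrt r"
proof -
  have "ln (1 / sqrt r) < 1 / sqrt r" using assms by (intro ln_less_self) simp
  moreover have "ln (1 / sqrt r) = - ln r / 2" using assms by (simp add: ln_div ln_sqrt)
  ultimately have "\<bar>ln r\<bar> \<le> 2 / sqrt r" using assms by simp
  then have "r * \<bar>ln r\<bar> \<le> r * (2 / sqrt r)" using assms by (intro mult_left_mono) auto
  also have "\<dots> = 2 * sqrt r" using assms by (simp add: field_simps flip: real_sqrt_mult)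
  finally show ?thesis .
qed

lemma tendsto_mult_Ln_0: "((\<lambda>w. w * Ln w) \<longlongrightarrow> 0) (at 0)"
proof (rule Lim_null_comparison)
  show "\<forall>\<^sub>F w in at 0. norm (w * Ln w) \<le> 2 * sqrt (norm w) + pi * norm w"
    unfolding eventually_at
  proof (intro exI[of _ 1] conjI ballI impI allI)
    fix w :: complex assume w: "w \<noteq> 0 \<and> dist w 0 < 1"
    have "norm (Ln w) \<le> \<bar>Re (Ln w)\<bar> + \<bar>Im (Ln w)\<bar>" by (rule cmod_le)
    also have "\<dots> \<le> \<bar>ln (norm w)\<bar> + pi"
      using w mpi_less_Im_Ln[of w] Im_Ln_le_pi[of w] by auto
    finally have "norm w * norm (Ln w) \<le> norm w * (\<bar>ln (norm w)\<bar> + pi)"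
      by (rule mult_left_mono) simp
    then have "norm (w * Ln w) \<le> norm w * \<bar>ln (norm w)\<bar> + pi * norm w"
      by (simp add: norm_mult algebra_simps)
    also have "\<dots> \<le> 2 * sqrt (norm w) + pi * norm w"
      using abs_ln_mult_le_sqrt[of "norm w"] w by simp
    finally show "norm (w * Ln w) \<le> 2 * sqrt (norm w) + pi * norm w" .
  qed simp
  show "((\<lambda>w::complex. 2 * sqrt (norm w) + pi * norm w) \<longlongrightarrow> 0) (at 0)"
    by (auto intro!: tendsto_eq_intros)
qed

lemma isCont_mult_Ln:
  assumes "w = 0 \<or> w \<notin> \<real>\<^sub>\<le>\<^sub>0"
  shows "isCont (\<lambda>w. w * Ln w) w"
proof (cases "w = 0")
  case True
  then show ?thesis using tendsto_mult_Ln_0 by (simp add: isCont_def)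
next
  case False
  then show ?thesis using assms by (intro continuous_intros continuous_at_Ln) auto
qed

lemma zero_factor_mult_exp:
  "zero_factor \<sigma> z0 z * exp (\<i> * of_int \<sigma> * (z - z0)) = exp (\<i> * of_int \<sigma> * (z - z0)) - 1"
proof -
  have "exp (- x) * exp x = 1" for x :: complex
    by (simp flip: exp_add)
  then show ?thesis by (simp add: zero_factor_def left_diff_distrib)
qed

lemma exp_int_mult_diff_eq:
  assumes "n = \<sigma> * int m"
  shows "exp (\<i> * of_int n * z) - exp (\<i> * of_int n * z0) =
    exp (\<i> * of_int n * z0) * (exp (\<i> * of_int \<sigma> * (z - z0)) - 1) *
      (\<Sum>j<m. exp (\<i> * of_int \<sigma> * (z - z0)) ^ j)"
proof -
  have "\<i> * of_int n * z = \<i> * of_int n * z0 + of_nat m * (\<i> * of_int \<sigma> * (z - z0))"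
    by (simp add: assms algebra_simps)
  then have "exp (\<i> * of_int n * z) = exp (\<i> * of_int n * z0) * exp (\<i> * of_int \<sigma> * (z - z0)) ^ m"
    by (simp only: exp_add exp_of_nat_mult)
  then have "exp (\<i> * of_int n * z) - exp (\<i> * of_int n * z0) =
      exp (\<i> * of_int n * z0) * (exp (\<i> * of_int \<sigma> * (z - z0)) ^ m - 1)"
    by (simp add: right_diff_distrib)
  then show ?thesis
    by (simp only: power_diff_1_eq mult.assoc)
qed

lemma has_integral_sum_exp_powers:
  assumes "\<sigma> \<noteq> 0" "m \<ge> 1"
  shows "((\<lambda>t. \<Sum>j<m. exp (\<i> * of_int \<sigma> * (of_real t - of_real t0)) ^ j) has_integral of_real (2 * pi))
     {a..a + 2 * pi}"
proof -
  have "((\<lambda>t. exp (\<i> * of_int \<sigma> * (of_real t - of_real t0)) ^ j) has_integral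
      (if j = 0 then of_real (2 * pi) else 0)) {a..a + 2 * pi}" for j
  proof (cases "j = 0")
    case True
    then show ?thesis using has_integral_const_real[of "1::complex" a "a + 2 * pi"]
      by (simp add: scaleR_conv_of_real)
  next
    case False
    define N where "N = \<sigma> * int j"
    have "N \<noteq> 0" using assms False by (simp add: N_def)
    have "exp (\<i> * of_int \<sigma> * (of_real t - of_real t0)) ^ j =
        exp (\<i> * of_int N * of_real t) * exp (- (\<i> * of_int N * of_real t0))" for t
      by (simp add: N_def algebra_simps flip: exp_of_nat_mult exp_add)
    moreover have "((\<lambda>t. exp (\<i> * of_int N * of_real t) * exp (- (\<i> * of_int N * of_real t0)))
        has_integral 0) {a..a + 2 * pi}"
      using has_integral_mult_left[OF has_integral_exp_int_mult[OF \<open>N \<noteq> 0\<close>]] by simp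
    ultimately show ?thesis using False by simp
  qed
  then have "((\<lambda>t. \<Sum>j<m. exp (\<i> * of_int \<sigma> * (of_real t - of_real t0)) ^ j) has_integral
      (\<Sum>j<m. if j = 0 then of_real (2 * pi) else 0)) {a..a + 2 * pi}"
    by (intro has_integral_sum) auto
  then show ?thesis using assms(2) by (simp add: sum.delta)
qed

lemma has_vector_derivative_Ln_zero_factor:
  assumes "Re (zero_factor \<sigma> (of_real t0) (of_real t)) > 0"
  shows "((\<lambda>s. Ln (zero_factor \<sigma> (of_real t0) (of_real s))) has_vector_derivative
      \<i> * of_int \<sigma> / (exp (\<i> * of_int \<sigma> * (of_real t - of_real t0)) - 1)) (at t)"
proof -
  define u where "u = zero_factor \<sigma> (of_real t0) (of_real t)"
  define v where "v = exp (\<i> * of_int \<sigma> * (of_real t - of_real t0))"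
  have "u \<noteq> 0" "u \<notin> \<real>\<^sub>\<le>\<^sub>0" using assms by (auto simp: u_def complex_nonpos_Reals_iff)
  have "((\<lambda>w. zero_factor \<sigma> (of_real t0) w) has_field_derivative \<i> * of_int \<sigma> * (1 - u))
      (at (of_real t))"
    unfolding u_def zero_factor_def by (auto intro!: derivative_eq_intros)
  then have "((\<lambda>s. zero_factor \<sigma> (of_real t0) (of_real s)) has_vector_derivative
      \<i> * of_int \<sigma> * (1 - u)) (at t)"
    by (rule has_vector_derivative_real_field)
  from field_vector_diff_chain_at[OF this has_field_derivative_Ln[OF \<open>u \<notin> \<real>\<^sub>\<le>\<^sub>0\<close>[unfolded u_def]]]
  have "((\<lambda>s. Ln (zero_factor \<sigma> (of_real t0) (of_real s))) has_vector_derivative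
      \<i> * of_int \<sigma> * (1 - u) * inverse u) (at t)"
    by (simp add: o_def u_def)
  moreover have "\<i> * of_int \<sigma> * (1 - u) * inverse u = \<i> * of_int \<sigma> / (v - 1)"
  proof -
    have "u * v = v - 1" "v \<noteq> 0"
      using zero_factor_mult_exp[of \<sigma> "of_real t0" "of_real t"] by (simp_all add: u_def v_def)
    then have "v - 1 \<noteq> 0" "(1 - u) * (v - 1) = u"
      using \<open>u \<noteq> 0\<close> by (auto simp: algebra_simps)
    have "\<i> * of_int \<sigma> * (1 - u) * inverse u = \<i> * of_int \<sigma> * ((1 - u) * (v - 1)) / (u * (v - 1))"
      using \<open>v - 1 \<noteq> 0\<close> by (simp add: divide_inverse)
    also have "\<dots> = \<i> * of_int \<sigma> / (v - 1)"
      using \<open>(1 - u) * (v - 1) = u\<close> \<open>u \<noteq> 0\<close> by simp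
    finally show ?thesis .
  qed
  ultimately show ?thesis
    unfolding v_def by (simp only:)
qed

lemma continuous_on_Ln_zero_factor_mult:
  assumes \<sigma>: "\<sigma> \<in> {1, -1}" and "n = \<sigma> * int m"
  shows "continuous_on {t0 - pi..t0 + pi}
    (\<lambda>t. Ln (zero_factor \<sigma> (of_real t0) (of_real t)) *
      (exp (\<i> * of_int n * of_real t) - exp (\<i> * of_int n * of_real t0)))"
proof (intro continuous_at_imp_continuous_on ballI)
  fix t assume t: "t \<in> {t0 - pi..t0 + pi}"
  define u where "u s = zero_factor \<sigma> (of_real t0) (of_real s)" for s
  define v where "v s = exp (\<i> * of_int \<sigma> * (of_real s - of_real t0))" for s
  have "isCont u t" unfolding u_def zero_factor_def by (intro continuous_intros)
  moreover have "u t = 0 \<or> u t \<notin> \<real>\<^sub>\<le>\<^sub>0"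
  proof (cases "t = t0")
    case True
    then show ?thesis by (simp add: u_def zero_factor_def)
  next
    case False
    then have "Re (u t) > 0"
      using t unfolding u_def by (intro Re_zero_factor_pos_line[OF \<sigma>]) auto
    then show ?thesis by (auto simp: complex_nonpos_Reals_iff)
  qed
  then have "isCont (\<lambda>w. w * Ln w) (u t)"
    by (rule isCont_mult_Ln)
  ultimately have "isCont (\<lambda>t. u t * Ln (u t)) t"
    by (rule isCont_o2)
  then have "isCont (\<lambda>t. exp (\<i> * of_int n * of_real t0) * v t * (\<Sum>j<m. v t ^ j) * (u t * Ln (u t))) t"
    by (rule continuous_mult[rotated]) (unfold v_def, intro continuous_intros)
  moreover have "(\<lambda>s. Ln (zero_factor \<sigma> (of_real t0) (of_real s)) *
        (exp (\<i> * of_int n * of_real s) - exp (\<i> * of_int n * of_real t0))) =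
      (\<lambda>s. exp (\<i> * of_int n * of_real t0) * v s * (\<Sum>j<m. v s ^ j) * (u s * Ln (u s)))"
  proof (rule ext)
    fix s
    have "exp (\<i> * of_int n * of_real s) - exp (\<i> * of_int n * of_real t0) =
        exp (\<i> * of_int n * of_real t0) * (u s * v s) * (\<Sum>j<m. v s ^ j)"
      using exp_int_mult_diff_eq[OF assms(2), of "of_real s" "of_real t0"]
      unfolding u_def v_def zero_factor_mult_exp[symmetric] .
    then show "Ln (zero_factor \<sigma> (of_real t0) (of_real s)) *
        (exp (\<i> * of_int n * of_real s) - exp (\<i> * of_int n * of_real t0)) =
      exp (\<i> * of_int n * of_real t0) * v s * (\<Sum>j<m. v s ^ j) * (u s * Ln (u s))"
      by (simp add: u_def ac_simps)
  qed
  ultimately show "isCont (\<lambda>t. Ln (zero_factor \<sigma> (of_real t0) (of_real t)) *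
      (exp (\<i> * of_int n * of_real t) - exp (\<i> * of_int n * of_real t0))) t"
    by (simp only:)
qed

text \<open>Integrate by parts against \<open>(exp (i n t) - exp (i n t0)) / (i n)\<close>, which vanishes at \<open>t0\<close>:
  the antiderivative then only involves the continuous function \<open>w Log w\<close>, and the derivative of
  the logarithm cancels against the geometric sum \<open>(exp (i n t) - exp (i n t0)) / (exp (\<plusminus>i (t - t0)) - 1)\<close>.\<close>

lemma has_integral_Ln_zero_factor:
  assumes \<sigma>: "\<sigma> \<in> {1, -1}" and "\<sigma> * n > 0"
  shows "((\<lambda>t. Ln (zero_factor \<sigma> (of_real t0) (of_real t)) * exp (\<i> * of_int n * of_real t))
      has_integral - of_real (2 * pi / real_of_int \<bar>n\<bar>) * exp (\<i> * of_int n * of_real t0))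
      {t0 - pi..t0 + pi}"
proof -
  define m where "m = nat (\<sigma> * n)"
  have "m \<ge> 1" using assms by (simp add: m_def)
  have n_eq: "n = \<sigma> * int m" and abs_n: "\<bar>n\<bar> = int m"
    using assms by (auto simp: m_def)
  define a where "a = t0 - pi"
  have b: "a + 2 * pi = t0 + pi" by (simp add: a_def)
  define u where "u t = zero_factor \<sigma> (of_real t0) (of_real t)" for t
  define v where "v t = exp (\<i> * of_int \<sigma> * (of_real t - of_real t0))" for t
  define E where "E t = exp (\<i> * of_int n * of_real t)" for t
  define S where "S t = (\<Sum>j<m. v t ^ j)" for t
  define H where "H t = Ln (u t) * (E t - E t0) / (\<i> * of_int n)" for t
  have "continuous_on {a..a + 2 * pi} H"
    using continuous_on_Ln_zero_factor_mult[OF \<sigma> n_eq] \<open>m \<ge> 1\<close> \<sigma> unfolding H_def u_def E_def b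
    by (intro continuous_on_divide continuous_on_const) (auto simp: n_eq a_def)
  moreover have "(H has_vector_derivative Ln (u t) * E t + E t0 * S t / of_nat m) (at t)"
    if t: "t \<in> {a..a + 2 * pi} - {t0}" for t
  proof -
    have "Re (u t) > 0"
      using t unfolding u_def by (intro Re_zero_factor_pos_line[OF \<sigma>]) (auto simp: a_def)
    then have "u t * v t \<noteq> 0"
      using t by (auto simp: v_def)
    then have "v t \<noteq> 1"
      using zero_factor_mult_exp[of \<sigma> "of_real t0" "of_real t"] by (auto simp: u_def v_def)
    have "((\<lambda>t. Ln (u t)) has_vector_derivative \<i> * of_int \<sigma> / (v t - 1)) (at t)"
      using has_vector_derivative_Ln_zero_factor[OF \<open>Re (u t) > 0\<close>[unfolded u_def]]
      by (simp add: u_def v_def)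
    then have "(H has_vector_derivative
        (Ln (u t) * (\<i> * of_int n * E t - 0) + \<i> * of_int \<sigma> / (v t - 1) * (E t - E t0))
          / (\<i> * of_int n)) (at t)"
      unfolding H_def E_def by (intro derivative_intros has_vector_derivative_exp_int_mult)
    moreover have "E t - E t0 = E t0 * (v t - 1) * S t"
      unfolding E_def v_def S_def by (rule exp_int_mult_diff_eq[OF n_eq])
    then have "\<i> * of_int \<sigma> / (v t - 1) * (E t - E t0) = \<i> * of_int \<sigma> * (E t0 * S t)"
      using \<open>v t \<noteq> 1\<close> by simp
    moreover have "(Ln (u t) * (\<i> * of_int n * E t - 0) + \<i> * of_int \<sigma> * (E t0 * S t)) / (\<i> * of_int n) =
        Ln (u t) * E t + E t0 * S t / of_nat m"
      using \<sigma> \<open>m \<ge> 1\<close> by (auto simp: n_eq field_simps)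
    ultimately show ?thesis
      by simp
  qed
  ultimately have FTC: "((\<lambda>t. Ln (u t) * E t + E t0 * S t / of_nat m) has_integral H (a + 2 * pi) - H a)
      {a..a + 2 * pi}"
    by (intro fundamental_theorem_of_calculus_strong[of "{t0}"]) auto
  have "((\<lambda>t. E t0 * S t / of_nat m) has_integral E t0 * of_real (2 * pi) / of_nat m) {a..a + 2 * pi}"
    using has_integral_sum_exp_powers[of \<sigma> m t0 a] \<sigma> \<open>m \<ge> 1\<close> unfolding S_def v_def
    by (intro has_integral_divide has_integral_mult_right) auto
  from has_integral_diff[OF FTC this]
  have "((\<lambda>t. Ln (u t) * E t) has_integral H (a + 2 * pi) - H a - E t0 * of_real (2 * pi) / of_nat m)
      {a..a + 2 * pi}"
    by simp
  moreover have "H (a + 2 * pi) = H a"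
    using zero_factor_add_2pi[of \<sigma> "of_real t0" "of_real a"] exp_int_mult_add_2pi[of n a]
    by (simp add: H_def u_def E_def)
  ultimately have "((\<lambda>t. Ln (u t) * E t) has_integral - E t0 * of_real (2 * pi) / of_nat m)
      {a..a + 2 * pi}"
    by simp
  then show ?thesis
    unfolding b by (simp add: a_def u_def E_def abs_n ac_simps)
qed

section \<open>Continuous logarithms near a boundary zero\<close>

lemma convex_open_strip: "convex (open_strip lam)"
proof -
  have "open_strip lam = {z. inner \<i> z < lam} \<inter> {z. inner \<i> z > - lam}"
    by (auto simp: open_strip_def inner_complex_def abs_less_iff)
  then show ?thesis
    by (simp only: convex_Int convex_halfspace_lt convex_halfspace_gt)
qed

lemma boundary_islimpt_open_strip:
  assumes "lam > 0" "\<bar>Im z\<bar> = lam"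
  shows "z islimpt open_strip lam"
  unfolding islimpt_approachable
proof (intro allI impI)
  fix e :: real assume "e > 0"
  define s where "s = min e lam / 2"
  have s: "0 < s" "s < lam" "s < e" using \<open>e > 0\<close> assms(1) by (auto simp: s_def)
  define d where "d = sgn (Im z)"
  have d: "d = 1 \<or> d = -1" "Im z = d * lam"
    using assms by (auto simp: d_def sgn_if)
  define w where "w = z - \<i> * of_real (d * s)"
  have "Im w = d * (lam - s)"
    by (simp add: w_def d(2) algebra_simps)
  then have "w \<in> open_strip lam"
    using d(1) s by (auto simp: open_strip_def)
  moreover have "dist w z = s"
    using d(1) s by (auto simp: w_def dist_norm norm_mult)
  ultimately show "\<exists>w\<in>open_strip lam. w \<noteq> z \<and> dist w z < e"
    using s by (metis dist_eq_0_iff less_irrefl)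
qed

lemma continuous_exp_eq_imp_diff_const:
  fixes f g :: "'a::topological_space \<Rightarrow> complex"
  assumes "connected S" "continuous_on S f" "continuous_on S g"
    and "\<And>x. x \<in> S \<Longrightarrow> exp (f x) = exp (g x)"
  obtains c where "\<And>x. x \<in> S \<Longrightarrow> f x = g x + c"
proof -
  have "(\<lambda>x. f x - g x) constant_on S"
  proof (rule continuous_discrete_range_constant[OF assms(1)])
    show "continuous_on S (\<lambda>x. f x - g x)" using assms(2,3) by (rule continuous_on_diff)
    fix x assume "x \<in> S"
    show "\<exists>e>0. \<forall>y. y \<in> S \<and> f y - g y \<noteq> f x - g x \<longrightarrow> e \<le> norm (f y - g y - (f x - g x))"
    proof (intro exI[of _ "2 * pi"] conjI allI impI)
      fix y assume y: "y \<in> S \<and> f y - g y \<noteq> f x - g x"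
      have "exp (f y - g y) = exp (f x - g x)"
        using assms(4) \<open>x \<in> S\<close> y by (simp add: exp_diff)
      then obtain m :: int where m: "f y - g y = f x - g x + of_real (of_int (2 * m) * pi) * \<i>"
        unfolding exp_eq by blast
      with y have "m \<noteq> 0" by auto
      then have "1 \<le> \<bar>real_of_int m\<bar>" by linarith
      then have "2 * pi * 1 \<le> 2 * pi * \<bar>real_of_int m\<bar>" by (intro mult_left_mono) auto
      then show "2 * pi \<le> norm (f y - g y - (f x - g x))"
        using m by (simp add: norm_mult abs_mult)
    qed simp
  qed
  then obtain c where "\<And>x. x \<in> S \<Longrightarrow> f x - g x = c" unfolding constant_on_def by blast
  then show ?thesis
    using that[of c] by (simp add: diff_eq_eq ac_simps)
qed

lemma tendsto_within_eq_isCont: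
  fixes f g :: "'a::t2_space \<Rightarrow> 'b::t2_space"
  assumes "(f \<longlongrightarrow> f z) (at z within S)" "z islimpt S" "isCont g z"
    and "\<forall>\<^sub>F w in at z within S. f w = g w"
  shows "f z = g z"
proof -
  have "(g \<longlongrightarrow> g z) (at z within S)"
    using assms(3) unfolding isCont_def by (rule tendsto_within_subset) simp
  then have "(f \<longlongrightarrow> g z) (at z within S)"
    by (rule tendsto_cong[OF assms(4), THEN iffD2])
  moreover have "at z within S \<noteq> bot"
    using assms(2) by (simp add: trivial_limit_within)
  ultimately show ?thesis
    using assms(1) tendsto_unique by blast
qed

lemma local_zero_factorization:
  assumes "h holomorphic_on S" "open S" "connected S" "z0 \<in> S" "\<exists>w\<in>S. h w \<noteq> 0"
    and "zorder h z0 = int k" "\<sigma> \<noteq> 0"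
  obtains r G where "r > 0" "G holomorphic_on ball z0 r"
    "\<And>w. w \<in> ball z0 r \<Longrightarrow> h w = zero_factor \<sigma> z0 w ^ k * exp (G w)"
proof -
  define g where "g = zor_poly h z0"
  have "\<exists>r>0. cball z0 r \<subseteq> S \<and> g holomorphic_on cball z0 r \<and>
      (\<forall>w\<in>cball z0 r. h w = g w * (w - z0) ^ k \<and> g w \<noteq> 0)"
    using zorder_exist_zero[OF assms(1-5)] assms(6) unfolding g_def by (simp only: nat_int)
  then obtain r0 where "r0 > 0" and g_hol: "g holomorphic_on cball z0 r0"
    and g: "\<And>w. w \<in> cball z0 r0 \<Longrightarrow> h w = g w * (w - z0) ^ k \<and> g w \<noteq> 0"
    by blast
  obtain q where q_hol: "q holomorphic_on UNIV" and "q z0 \<noteq> 0"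
    and q: "\<And>z. zero_factor \<sigma> z0 z = (z - z0) * q z"
    using zero_factor_eq_mult[OF assms(7)] by blast
  have "isCont q z0"
    using holomorphic_on_imp_continuous_on[OF q_hol] by (simp add: continuous_on_eq_continuous_at)
  then obtain r1 where "r1 > 0" and q_nz: "\<And>w. dist z0 w < r1 \<Longrightarrow> q w \<noteq> 0"
    using continuous_at_avoid \<open>q z0 \<noteq> 0\<close> by blast
  define r where "r = min r0 r1"
  have "r > 0" using \<open>r0 > 0\<close> \<open>r1 > 0\<close> by (simp add: r_def)
  have sub: "ball z0 r \<subseteq> cball z0 r0" by (auto simp: r_def)
  have q_nz': "q w \<noteq> 0" if "w \<in> ball z0 r" for w
    using that q_nz by (simp add: r_def)
  have "(\<lambda>w. g w / q w ^ k) holomorphic_on ball z0 r"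
    using q_nz' holomorphic_on_subset[OF g_hol sub] holomorphic_on_subset[OF q_hol]
    by (intro holomorphic_intros) auto
  moreover have "g w / q w ^ k \<noteq> 0" if "w \<in> ball z0 r" for w
    using g[of w] sub that q_nz'[OF that] by auto
  ultimately obtain G where G_hol: "G holomorphic_on ball z0 r"
    and G: "\<And>w. w \<in> ball z0 r \<Longrightarrow> exp (G w) = g w / q w ^ k"
    using holomorphic_logarithm_exists[OF convex_ball open_ball] \<open>r > 0\<close> centre_in_ball by blast
  have "h w = zero_factor \<sigma> z0 w ^ k * exp (G w)" if "w \<in> ball z0 r" for w
    using g[of w] sub that G[OF that] q_nz'[OF that] by (auto simp: q power_mult_distrib)
  then show ?thesis using that \<open>r > 0\<close> G_hol by blast
qed

lemma boundary_log_representation: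
  assumes lam: "lam > 0" and "open U" "closed_strip lam \<subseteq> U" "h holomorphic_on U"
    and h_nonzero: "\<forall>z\<in>open_strip lam. h z \<noteq> 0"
    and L_cont: "continuous_on (open_strip lam) L"
    and L_log: "\<forall>z\<in>open_strip lam. exp (L z) = h z"
    and L_boundary: "\<forall>z. \<bar>Im z\<bar> = lam \<and> h z \<noteq> 0 \<longrightarrow> (L \<longlongrightarrow> L z) (at z within open_strip lam)"
    and \<sigma>: "\<sigma> \<in> {1, -1}" and z0: "Im z0 = of_int \<sigma> * lam" and "zorder h z0 = int k"
  obtains r G where "0 < r" "r \<le> pi" "G holomorphic_on ball z0 r"
    "\<And>z. z \<in> ball z0 r \<Longrightarrow> Im z = Im z0 \<Longrightarrow> z \<noteq> z0 \<Longrightarrow>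
       L z = of_nat k * Ln (zero_factor \<sigma> z0 z) + G z"
proof -
  have "\<bar>Im z0\<bar> = lam" using \<sigma> z0 lam by auto
  then have z0_lim: "z0 islimpt open_strip lam"
    using lam by (rule boundary_islimpt_open_strip[rotated])
  obtain \<rho> where "\<rho> > 0" "ball z0 \<rho> \<subseteq> U"
    using \<open>\<bar>Im z0\<bar> = lam\<close> assms(2,3) openE[of U z0] by (auto simp: closed_strip_def)
  obtain w where "w \<in> open_strip lam" "dist w z0 < \<rho>"
    using z0_lim \<open>\<rho> > 0\<close> islimpt_approachable by blast
  then have "\<exists>w\<in>ball z0 \<rho>. h w \<noteq> 0"
    using h_nonzero by (auto simp: dist_commute)
  moreover have "\<sigma> \<noteq> 0" using \<sigma> by auto
  ultimately obtain r1 G1 where "r1 > 0" and G1_hol: "G1 holomorphic_on ball z0 r1"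
    and h_eq: "\<And>w. w \<in> ball z0 r1 \<Longrightarrow> h w = zero_factor \<sigma> z0 w ^ k * exp (G1 w)"
    using local_zero_factorization[OF holomorphic_on_subset[OF assms(4) \<open>ball z0 \<rho> \<subseteq> U\<close>]
        open_ball connected_ball _ _ \<open>zorder h z0 = int k\<close>] \<open>\<rho> > 0\<close>
    by (metis centre_in_ball)
  define r where "r = min r1 pi"
  define D where "D = ball z0 r \<inter> open_strip lam"
  define R where "R w = of_nat k * Ln (zero_factor \<sigma> z0 w) + G1 w" for w
  have "r > 0" "r \<le> pi" using \<open>r1 > 0\<close> by (auto simp: r_def)
  have R_cont: "isCont R w" if "w \<in> ball z0 r" "Re (zero_factor \<sigma> z0 w) > 0" for w
  proof -
    have "isCont G1 w"
      using holomorphic_on_imp_continuous_on[OF G1_hol] that(1)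
      by (simp add: r_def continuous_on_eq_continuous_at)
    then show ?thesis
      unfolding R_def zero_factor_def using that(2)
      by (intro continuous_intros continuous_at_Ln)
         (auto simp: zero_factor_def complex_nonpos_Reals_iff)
  qed
  have Re_pos: "Re (zero_factor \<sigma> z0 w) > 0" if "w \<in> open_strip lam" for w
    using that \<sigma> z0 by (intro Re_zero_factor_pos_strip) (auto simp: open_strip_def)
  have exp_eq: "exp (L w) = exp (R w)" if "w \<in> D" for w
  proof -
    have "zero_factor \<sigma> z0 w \<noteq> 0" using Re_pos that by (force simp: D_def)
    then have "exp (R w) = zero_factor \<sigma> z0 w ^ k * exp (G1 w)"
      by (simp add: R_def exp_add exp_of_nat_mult)
    also have "\<dots> = exp (L w)" using that h_eq L_log by (auto simp: D_def r_def)
    finally show ?thesis ..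
  qed
  have "continuous_on D L" using L_cont by (rule continuous_on_subset) (auto simp: D_def)
  moreover have "continuous_on D R"
    using R_cont Re_pos by (intro continuous_at_imp_continuous_on) (auto simp: D_def)
  moreover have "connected D"
    unfolding D_def by (intro convex_connected convex_Int convex_ball convex_open_strip)
  ultimately obtain c where c: "\<And>w. w \<in> D \<Longrightarrow> L w = R w + c"
    using continuous_exp_eq_imp_diff_const exp_eq by blast
  have "L z = of_nat k * Ln (zero_factor \<sigma> z0 z) + (G1 z + c)"
    if z: "z \<in> ball z0 r" "Im z = Im z0" "z \<noteq> z0" for z
  proof -
    have "\<bar>Re (z - z0)\<bar> = dist z z0"
      using z(2) by (simp add: dist_norm cmod_eq_Re)
    then have "Re (zero_factor \<sigma> z0 z) > 0"
      using z \<open>r \<le> pi\<close> by (intro Re_zero_factor_pos_line[OF \<sigma>]) (auto simp: dist_commute)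
    then have "h z \<noteq> 0" using h_eq[of z] z(1) by (auto simp: r_def)
    moreover have "\<bar>Im z\<bar> = lam" using z(2) \<open>\<bar>Im z0\<bar> = lam\<close> by simp
    ultimately have "(L \<longlongrightarrow> L z) (at z within open_strip lam)" using L_boundary by blast
    moreover have "z islimpt open_strip lam"
      using lam \<open>\<bar>Im z\<bar> = lam\<close> by (rule boundary_islimpt_open_strip)
    moreover have "isCont (\<lambda>w. R w + c) z"
      using R_cont[OF z(1) \<open>Re (zero_factor \<sigma> z0 z) > 0\<close>] by (intro continuous_intros)
    moreover have "\<forall>\<^sub>F w in at z within open_strip lam. L w = R w + c"
      unfolding eventually_at_topological using z(1) c by (intro exI[of _ "ball z0 r"]) (auto simp: D_def)
    ultimately have "L z = R z + c" by (rule tendsto_within_eq_isCont)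
    then show ?thesis by (simp add: R_def)
  qed
  moreover have "(\<lambda>w. G1 w + c) holomorphic_on ball z0 r"
    using G1_hol by (intro holomorphic_intros) (auto simp: r_def elim: holomorphic_on_subset)
  ultimately show ?thesis
    using that \<open>r > 0\<close> \<open>r \<le> pi\<close> by blast
qed

section \<open>Cutoffs and the asymptotics\<close>

definition cutoff_near :: "real \<Rightarrow> real \<Rightarrow> (real \<Rightarrow> real) \<Rightarrow> bool" where
  "cutoff_near t0 \<epsilon> chi \<longleftrightarrow> smooth_real chi \<and> (\<forall>t. chi (t + 2 * pi) = chi t) \<and>
     (\<forall>t. chi t \<noteq> 0 \<longrightarrow> (\<exists>m::int. \<bar>t - t0 - 2 * pi * real_of_int m\<bar> < \<epsilon>)) \<and>
     (\<exists>\<eta>>0. \<forall>t. \<bar>t - t0\<bar> < \<eta> \<longrightarrow> chi t = 1)"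

lemma cutoff_near_vanishes:
  assumes "cutoff_near t0 \<epsilon> chi" "\<epsilon> \<le> \<bar>t - t0\<bar>" "\<bar>t - t0\<bar> \<le> 2 * pi - \<epsilon>"
  shows "chi t = 0"
proof (rule ccontr)
  assume "chi t \<noteq> 0"
  then obtain m :: int where m: "\<bar>t - t0 - 2 * pi * real_of_int m\<bar> < \<epsilon>"
    using assms(1) unfolding cutoff_near_def by blast
  with assms(2) have "m \<noteq> 0" by auto
  then have "2 * pi \<le> 2 * pi * \<bar>real_of_int m\<bar>"
    using mult_left_mono[of 1 "\<bar>real_of_int m\<bar>" "2 * pi"] by simp
  moreover have "\<bar>2 * pi * real_of_int m\<bar> = 2 * pi * \<bar>real_of_int m\<bar>"
    by (simp add: abs_mult)
  moreover have "\<bar>2 * pi * real_of_int m\<bar> \<le> \<bar>t - t0\<bar> + \<bar>t - t0 - 2 * pi * real_of_int m\<bar>"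
    by arith
  ultimately show False
    using m assms(3) by linarith
qed

lemma vector_derivative_eq_0_near:
  assumes "d > 0" "\<And>s. s \<in> ball t d \<Longrightarrow> f s = 0"
  shows "vector_derivative f (at t) = 0"
proof -
  have "(f has_vector_derivative 0) (at t)"
    by (rule has_vector_derivative_transform_within_open[OF has_vector_derivative_const _ centre_in_ball[THEN iffD2]])
       (use assms in auto)
  then show ?thesis by (rule vector_derivative_at)
qed

lemma vector_derivative_periodic:
  assumes "\<And>s. f (s + p) = f s" "(f has_vector_derivative D) (at (a + p))"
  shows "vector_derivative f (at a) = D"
proof -
  have "((\<lambda>s. s + p) has_vector_derivative 1) (at a)"
    by (auto intro!: derivative_eq_intros)
  from vector_diff_chain_at[OF this assms(2)[simplified]] have "(f has_vector_derivative D) (at a)"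
    using assms(1) by (simp add: o_def)
  then show ?thesis by (rule vector_derivative_at)
qed

lemma C2_on_period_cutoff_holomorphic:
  assumes chi: "cutoff_near t0 \<epsilon> chi" and "0 < \<epsilon>" "\<epsilon> < r" "r \<le> pi"
    and G: "G holomorphic_on ball (of_real t0 + c) r"
  shows "C2_on_period (\<lambda>t. of_real (chi t) * G (of_real t + c)) (t0 - pi)"
proof -
  define \<Psi> where "\<Psi> t = of_real (chi t) * G (of_real t + c)" for t
  define \<delta> where "\<delta> = r - \<epsilon>"
  have "\<delta> > 0" using assms by (simp add: \<delta>_def)
  have \<Psi>_zero: "\<Psi> s = 0" if "r \<le> \<bar>t - t0\<bar>" "\<bar>t - t0\<bar> \<le> pi" "s \<in> ball t \<delta>" for s t
  proof -
    have "\<epsilon> \<le> \<bar>s - t0\<bar>" "\<bar>s - t0\<bar> \<le> 2 * pi - \<epsilon>"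
      using that \<open>r \<le> pi\<close> by (auto simp: \<delta>_def dist_real_def)
    then show ?thesis using cutoff_near_vanishes[OF chi] by (simp add: \<Psi>_def)
  qed
  have "C2_at \<Psi> t" if "t \<in> {t0 - pi..t0 - pi + 2 * pi}" for t
  proof (cases "\<bar>t - t0\<bar> < r")
    case True
    then have "of_real t + c \<in> ball (of_real t0 + c) r"
      by (simp add: dist_norm flip: of_real_diff)
    then have "C2_at (\<lambda>s. G (of_real s + c)) t"
      by (rule C2_at_holomorphic_comp[OF G open_ball])
    moreover have "smooth_real chi" using chi by (simp add: cutoff_near_def)
    ultimately show ?thesis
      unfolding \<Psi>_def by (intro C2_at_mult C2_at_of_real_smooth)
  next
    case False
    then show ?thesis
      using \<Psi>_zero[of t] that by (intro C2_at_transform[OF C2_at_const \<open>\<delta> > 0\<close>]) auto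
  qed
  moreover have "\<Psi> t = 0" "vector_derivative \<Psi> (at t) = 0" if "\<bar>t - t0\<bar> = pi" for t
    using \<Psi>_zero[of t] that \<open>r \<le> pi\<close> \<open>\<delta> > 0\<close> by (auto intro!: vector_derivative_eq_0_near)
  ultimately show ?thesis
    unfolding C2_on_period_def \<Psi>_def[symmetric] by simp
qed

lemma C2_on_period_cutoff_log:
  assumes chi: "cutoff_near t0 \<epsilon> chi" and \<sigma>: "\<sigma> \<in> {1, -1}"
  shows "C2_on_period (\<lambda>t. (1 - of_real (chi t)) * Ln (zero_factor \<sigma> (of_real t0) (of_real t))) (t0 - pi)"
proof -
  define \<Psi> where "\<Psi> t = (1 - of_real (chi t)) * Ln (zero_factor \<sigma> (of_real t0) (of_real t))" for t
  obtain \<eta> where "\<eta> > 0" and one: "\<And>t. \<bar>t - t0\<bar> < \<eta> \<Longrightarrow> chi t = 1"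
    using chi unfolding cutoff_near_def by blast
  have C2: "C2_at \<Psi> t" if "t \<in> {t0 - pi..t0 - pi + 2 * pi}" for t
  proof (cases "\<bar>t - t0\<bar> < \<eta>")
    case True
    then show ?thesis
      using one by (intro C2_at_transform[OF C2_at_const, of "\<eta> - \<bar>t - t0\<bar>"])
        (auto simp: \<Psi>_def dist_real_def)
  next
    case False
    define W where "W = {w. 0 < Re (zero_factor \<sigma> (of_real t0) w)}"
    have "open W"
      unfolding W_def zero_factor_def by (intro open_Collect_less continuous_intros)
    moreover have "(\<lambda>w. Ln (zero_factor \<sigma> (of_real t0) w)) holomorphic_on W"
      unfolding W_def zero_factor_def
      by (intro holomorphic_intros) (auto simp: complex_nonpos_Reals_iff)
    moreover have "of_real t + 0 \<in> W"
      using False that \<open>\<eta> > 0\<close> unfolding W_def by (intro CollectI Re_zero_factor_pos_line[OF \<sigma>]) auto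
    ultimately have "C2_at (\<lambda>s. Ln (zero_factor \<sigma> (of_real t0) (of_real s + 0))) t"
      by (intro C2_at_holomorphic_comp)
    moreover have "smooth_real chi" using chi by (simp add: cutoff_near_def)
    ultimately show ?thesis
      unfolding \<Psi>_def by (auto intro!: C2_at_mult C2_at_diff C2_at_const C2_at_of_real_smooth)
  qed
  have per: "\<Psi> (s + 2 * pi) = \<Psi> s" for s
    using chi zero_factor_add_2pi[of \<sigma> "of_real t0" "of_real s"] by (simp add: \<Psi>_def cutoff_near_def)
  have "vector_derivative \<Psi> (at (t0 - pi)) = vector_derivative \<Psi> (at (t0 - pi + 2 * pi))"
    by (rule vector_derivative_periodic[OF per C2_at_vector_derivative(1)[OF C2]]) simp
  then show ?thesis
    unfolding C2_on_period_def \<Psi>_def[symmetric] using C2 per[of "t0 - pi"] by auto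
qed

lemma fourier_coeff_cutoff_split:
  assumes chi: "cutoff_near t0 \<epsilon> chi" and "0 < \<epsilon>" "\<epsilon> < r" "r \<le> pi"
    and G: "G holomorphic_on ball (of_real t0 + c) r"
    and \<sigma>: "\<sigma> \<in> {1, -1}" and "\<sigma> * n > 0"
    and L_eq: "\<And>t. 0 < \<bar>t - t0\<bar> \<Longrightarrow> \<bar>t - t0\<bar> < r \<Longrightarrow>
      L (of_real t + c) = of_nat k * Ln (zero_factor \<sigma> (of_real t0) (of_real t)) + G (of_real t + c)"
  shows "integral {t0 - pi..t0 + pi} (\<lambda>t. of_real (chi t) * L (of_real t + c) * exp (\<i> * of_int n * of_real t))
      - (- of_real (2 * pi * real k / real_of_int \<bar>n\<bar>) * exp (\<i> * of_int n * of_real t0)) =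
    integral {t0 - pi..t0 + pi} (\<lambda>t. of_real (chi t) * G (of_real t + c) * exp (\<i> * of_int n * of_real t))
      - of_nat k * integral {t0 - pi..t0 + pi}
          (\<lambda>t. (1 - of_real (chi t)) * Ln (zero_factor \<sigma> (of_real t0) (of_real t)) * exp (\<i> * of_int n * of_real t))"
proof -
  let ?I = "{t0 - pi..t0 + pi}"
  define E where "E t = exp (\<i> * of_int n * complex_of_real t)" for t
  define Fr where "Fr t = Ln (zero_factor \<sigma> (of_real t0) (of_real t))" for t
  define \<Psi>1 where "\<Psi>1 t = of_real (chi t) * G (of_real t + c)" for t
  define \<Psi>2 where "\<Psi>2 t = (1 - of_real (chi t)) * Fr t" for t
  have "t0 - pi + 2 * pi = t0 + pi" by simp
  have "continuous_on ?I \<Psi>1" "continuous_on ?I \<Psi>2"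
    using C2_on_period_continuous[OF C2_on_period_cutoff_holomorphic[OF chi \<open>0 < \<epsilon>\<close> \<open>\<epsilon> < r\<close> \<open>r \<le> pi\<close> G]]
      C2_on_period_continuous[OF C2_on_period_cutoff_log[OF chi \<sigma>]]
      \<open>t0 - pi + 2 * pi = t0 + pi\<close>
    unfolding \<Psi>1_def \<Psi>2_def Fr_def by simp_all
  then have "((\<lambda>t. \<Psi>1 t * E t) has_integral integral ?I (\<lambda>t. \<Psi>1 t * E t)) ?I"
    "((\<lambda>t. \<Psi>2 t * E t) has_integral integral ?I (\<lambda>t. \<Psi>2 t * E t)) ?I"
    unfolding E_def by (auto intro!: integrable_integral integrable_continuous_interval continuous_intros)
  moreover have "((\<lambda>t. Fr t * E t) has_integral - of_real (2 * pi / real_of_int \<bar>n\<bar>) * E t0) ?I"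
    unfolding Fr_def E_def by (rule has_integral_Ln_zero_factor[OF \<sigma> \<open>\<sigma> * n > 0\<close>])
  ultimately have hsum: "((\<lambda>t. of_nat k * (Fr t * E t) + \<Psi>1 t * E t - of_nat k * (\<Psi>2 t * E t)) has_integral
      of_nat k * (- of_real (2 * pi / real_of_int \<bar>n\<bar>) * E t0) + integral ?I (\<lambda>t. \<Psi>1 t * E t)
        - of_nat k * integral ?I (\<lambda>t. \<Psi>2 t * E t)) ?I"
    by (intro has_integral_diff has_integral_add has_integral_mult_right)
  have pw: "of_real (chi t) * L (of_real t + c) * E t =
      of_nat k * (Fr t * E t) + \<Psi>1 t * E t - of_nat k * (\<Psi>2 t * E t)"
    if t: "t \<in> ?I - {t0}" for t
  proof (cases "chi t = 0")
    case True
    then show ?thesis by (simp add: \<Psi>1_def \<Psi>2_def algebra_simps)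
  next
    case False
    then have "\<bar>t - t0\<bar> < \<epsilon>"
      using cutoff_near_vanishes[OF chi, of t] t \<open>\<epsilon> < r\<close> \<open>r \<le> pi\<close> by force
    then have "L (of_real t + c) = of_nat k * Fr t + G (of_real t + c)"
      using L_eq[of t] t \<open>\<epsilon> < r\<close> by (simp add: Fr_def)
    then show ?thesis by (simp add: \<Psi>1_def \<Psi>2_def algebra_simps)
  qed
  have "((\<lambda>t. of_real (chi t) * L (of_real t + c) * E t) has_integral
      of_nat k * (- of_real (2 * pi / real_of_int \<bar>n\<bar>) * E t0) + integral ?I (\<lambda>t. \<Psi>1 t * E t)
        - of_nat k * integral ?I (\<lambda>t. \<Psi>2 t * E t)) ?I"
    by (rule has_integral_spike_finite[of "{t0}", OF _ pw hsum]) simp_all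
  then have "integral ?I (\<lambda>t. of_real (chi t) * L (of_real t + c) * E t)
      - (- of_real (2 * pi * real k / real_of_int \<bar>n\<bar>) * E t0) =
      integral ?I (\<lambda>t. \<Psi>1 t * E t) - of_nat k * integral ?I (\<lambda>t. \<Psi>2 t * E t)"
    by (simp add: integral_unique)
  then show ?thesis
    unfolding E_def \<Psi>1_def \<Psi>2_def Fr_def by (simp only: mult.assoc)
qed

lemma fourier_coeff_boundary_log:
  fixes \<sigma> :: int and F :: "int filter"
  assumes lam: "lam > 0" and U: "open U" "closed_strip lam \<subseteq> U" and h: "h holomorphic_on U"
    and h_nonzero: "\<forall>z\<in>open_strip lam. h z \<noteq> 0"
    and L_cont: "continuous_on (open_strip lam) L"
    and L_log: "\<forall>z\<in>open_strip lam. exp (L z) = h z"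
    and L_boundary: "\<forall>z. \<bar>Im z\<bar> = lam \<and> h z \<noteq> 0 \<longrightarrow> (L \<longlongrightarrow> L z) (at z within open_strip lam)"
    and \<sigma>: "\<sigma> \<in> {1, -1}" and ord: "zorder h (of_real t0 + \<i> * of_int \<sigma> * of_real lam) = int k"
    and F: "\<forall>\<^sub>F n in F. \<sigma> * n > 0"
  shows "\<exists>\<epsilon>>0. \<forall>chi. cutoff_near t0 \<epsilon> chi \<longrightarrow>
     (\<lambda>n. integral {t0 - pi..t0 + pi}
          (\<lambda>t. of_real (chi t) * L (of_real t + \<i> * of_int \<sigma> * of_real lam) * exp (\<i> * of_int n * of_real t))
        - (- of_real (2 * pi * real k / real_of_int \<bar>n\<bar>) * exp (\<i> * of_int n * of_real t0)))
     \<in> O[F](\<lambda>n. 1 / (of_int n)^2)"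
proof -
  define c where "c = \<i> * of_int \<sigma> * complex_of_real lam"
  obtain r G where "0 < r" "r \<le> pi" and G: "G holomorphic_on ball (of_real t0 + c) r"
    and L_eq: "\<And>z. z \<in> ball (of_real t0 + c) r \<Longrightarrow> Im z = Im (of_real t0 + c) \<Longrightarrow> z \<noteq> of_real t0 + c \<Longrightarrow>
       L z = of_nat k * Ln (zero_factor \<sigma> (of_real t0 + c) z) + G z"
    using boundary_log_representation[OF lam U h h_nonzero L_cont L_log L_boundary \<sigma>, of "of_real t0 + c" k] ord
    by (auto simp: c_def)
  have L_line: "L (of_real t + c) = of_nat k * Ln (zero_factor \<sigma> (of_real t0) (of_real t)) + G (of_real t + c)"
    if "0 < \<bar>t - t0\<bar>" "\<bar>t - t0\<bar> < r" for t
    using L_eq[of "of_real t + c"] that by (simp add: zero_factor_def dist_norm flip: of_real_diff)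
  define \<epsilon> where "\<epsilon> = r / 2"
  have "0 < \<epsilon>" "\<epsilon> < r" using \<open>0 < r\<close> by (auto simp: \<epsilon>_def)
  have "(\<lambda>n. integral {t0 - pi..t0 + pi}
          (\<lambda>t. of_real (chi t) * L (of_real t + c) * exp (\<i> * of_int n * of_real t))
        - (- of_real (2 * pi * real k / real_of_int \<bar>n\<bar>) * exp (\<i> * of_int n * of_real t0)))
     \<in> O[F](\<lambda>n. 1 / (of_int n)^2)" if chi: "cutoff_near t0 \<epsilon> chi" for chi
  proof -
    have "t0 - pi + 2 * pi = t0 + pi" by simp
    obtain C1 where C1: "\<And>n::int. n \<noteq> 0 \<Longrightarrow> norm (integral {t0 - pi..t0 + pi}
        (\<lambda>t. of_real (chi t) * G (of_real t + c) * exp (\<i> * of_int n * of_real t))) \<le> C1 / (of_int n)^2"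
      using fourier_coeff_C2_bound[OF C2_on_period_cutoff_holomorphic[OF chi \<open>0 < \<epsilon>\<close> \<open>\<epsilon> < r\<close> \<open>r \<le> pi\<close> G]]
        \<open>t0 - pi + 2 * pi = t0 + pi\<close> by auto
    obtain C2 where C2: "\<And>n::int. n \<noteq> 0 \<Longrightarrow> norm (integral {t0 - pi..t0 + pi}
        (\<lambda>t. (1 - of_real (chi t)) * Ln (zero_factor \<sigma> (of_real t0) (of_real t)) * exp (\<i> * of_int n * of_real t)))
          \<le> C2 / (of_int n)^2"
      using fourier_coeff_C2_bound[OF C2_on_period_cutoff_log[OF chi \<sigma>]]
        \<open>t0 - pi + 2 * pi = t0 + pi\<close> by auto
    have "norm (integral {t0 - pi..t0 + pi}
          (\<lambda>t. of_real (chi t) * L (of_real t + c) * exp (\<i> * of_int n * of_real t))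
        - (- of_real (2 * pi * real k / real_of_int \<bar>n\<bar>) * exp (\<i> * of_int n * of_real t0)))
      \<le> (C1 + real k * C2) * norm (1 / (of_int n)^2 :: complex)"
      if "\<sigma> * n > 0" for n
    proof -
      have "n \<noteq> 0" using that by auto
      define I1 where "I1 = integral {t0 - pi..t0 + pi}
        (\<lambda>t. of_real (chi t) * G (of_real t + c) * exp (\<i> * of_int n * of_real t))"
      define I2 where "I2 = integral {t0 - pi..t0 + pi}
        (\<lambda>t. (1 - of_real (chi t)) * Ln (zero_factor \<sigma> (of_real t0) (of_real t)) * exp (\<i> * of_int n * of_real t))"
      have "norm (I1 - of_nat k * I2) \<le> norm I1 + real k * norm I2"
        using norm_triangle_ineq4[of I1 "of_nat k * I2"] by (simp add: norm_mult)
      also have "\<dots> \<le> C1 / (of_int n)^2 + real k * (C2 / (of_int n)^2)"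
        using C1[OF \<open>n \<noteq> 0\<close>] C2[OF \<open>n \<noteq> 0\<close>] unfolding I1_def I2_def
        by (intro add_mono mult_left_mono) auto
      moreover have "integral {t0 - pi..t0 + pi}
          (\<lambda>t. of_real (chi t) * L (of_real t + c) * exp (\<i> * of_int n * of_real t))
        - (- of_real (2 * pi * real k / real_of_int \<bar>n\<bar>) * exp (\<i> * of_int n * of_real t0)) =
          I1 - of_nat k * I2"
        unfolding I1_def I2_def
        by (rule fourier_coeff_cutoff_split[OF chi \<open>0 < \<epsilon>\<close> \<open>\<epsilon> < r\<close> \<open>r \<le> pi\<close> G \<sigma> that L_line])
      ultimately show ?thesis
        by (simp add: norm_divide norm_power add_divide_distrib)
    qed
    then show ?thesis
      by (intro bigoI eventually_mono[OF F])
  qed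
  then show ?thesis
    using \<open>0 < \<epsilon>\<close> unfolding c_def by blast
qed

theorem lemmaB2:
  fixes lam :: real and h L :: "complex \<Rightarrow> complex" and U :: "complex set"
    and t0 :: real and k :: nat
  assumes lam_pos: "lam > 0"
    and U_open: "open U" and U_strip: "closed_strip lam \<subseteq> U"
    and h_holo: "h holomorphic_on U"
    and h_periodic: "\<forall>z\<in>U. z + complex_of_real (2 * pi) \<in> U \<and> h (z + complex_of_real (2 * pi)) = h z"
    and h_nonzero: "\<forall>z\<in>open_strip lam. h z \<noteq> 0"
    and L_cont: "continuous_on (open_strip lam) L"
    and L_log: "\<forall>z\<in>open_strip lam. exp (L z) = h z"
    and L_boundary: "\<forall>z. \<bar>Im z\<bar> = lam \<and> h z \<noteq> 0 \<longrightarrow> (L \<longlongrightarrow> L z) (at z within open_strip lam)"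
  shows
   "(h (complex_of_real t0 + \<i> * complex_of_real lam) = 0 \<and>
     zorder h (complex_of_real t0 + \<i> * complex_of_real lam) = int k \<longrightarrow>
     (\<exists>\<epsilon>>0. \<forall>(chi::real \<Rightarrow> real).
        smooth_real chi \<and> (\<forall>t. chi (t + 2 * pi) = chi t) \<and>
        (\<forall>t. chi t \<noteq> 0 \<longrightarrow> (\<exists>m::int. \<bar>t - t0 - 2 * pi * real_of_int m\<bar> < \<epsilon>)) \<and>
        (\<exists>\<eta>>0. \<forall>t. \<bar>t - t0\<bar> < \<eta> \<longrightarrow> chi t = 1) \<longrightarrow>
        (\<lambda>n::int. integral {t0 - pi..t0 + pi}
             (\<lambda>t. complex_of_real (chi t) * L (complex_of_real t + \<i> * complex_of_real lam)
                   * exp (\<i> * of_int n * complex_of_real t))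
           - ( - complex_of_real (2 * pi * real k / real_of_int \<bar>n\<bar>)
                 * exp (\<i> * of_int n * complex_of_real t0)))
        \<in> O[at_top](\<lambda>n. 1 / (of_int n)^2)))
    \<and>
    (h (complex_of_real t0 - \<i> * complex_of_real lam) = 0 \<and>
     zorder h (complex_of_real t0 - \<i> * complex_of_real lam) = int k \<longrightarrow>
     (\<exists>\<epsilon>>0. \<forall>(chi::real \<Rightarrow> real).
        smooth_real chi \<and> (\<forall>t. chi (t + 2 * pi) = chi t) \<and>
        (\<forall>t. chi t \<noteq> 0 \<longrightarrow> (\<exists>m::int. \<bar>t - t0 - 2 * pi * real_of_int m\<bar> < \<epsilon>)) \<and>
        (\<exists>\<eta>>0. \<forall>t. \<bar>t - t0\<bar> < \<eta> \<longrightarrow> chi t = 1) \<longrightarrow>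
        (\<lambda>n::int. integral {t0 - pi..t0 + pi}
             (\<lambda>t. complex_of_real (chi t) * L (complex_of_real t - \<i> * complex_of_real lam)
                   * exp (\<i> * of_int n * complex_of_real t))
           - ( - complex_of_real (2 * pi * real k / real_of_int \<bar>n\<bar>)
                 * exp (\<i> * of_int n * complex_of_real t0)))
        \<in> O[at_bot](\<lambda>n. 1 / (of_int n)^2)))"
proof -
  note asymptotics = fourier_coeff_boundary_log[OF lam_pos U_open U_strip h_holo h_nonzero L_cont L_log L_boundary]
  have "\<forall>\<^sub>F n in at_top. 1 * n > (0::int)"
    by simp
  moreover have "\<forall>\<^sub>F n in at_bot. (-1) * n > (0::int)"
    unfolding eventually_at_bot_linorder by (intro exI[of _ "-1"]) simp
  ultimately show ?thesis
    using asymptotics[of 1 t0 k at_top] asymptotics[of "-1" t0 k at_bot] unfolding cutoff_near_def by simp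
qed

end
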